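(* Consider the control system $\dot x=f(x)+g(x)u$ described in the context, and suppose Assumptions A1 and A2 hold. Then the domain of null-controllability with safety constraint $\mathcal{D}$ is an open and connected subset of $\mathbb{R}^n$.
   Context: System: $\dot x = f(x)+g(x)u$, $x\in\mathbb{R}^n$, $u\in\mathbb{R}^m$, where $f:\mathbb{R}^n\to\mathbb{R}^n$ and $g:\mathbb{R}^n\to\mathbb{R}^{n\times m}$ are locally Lipschitz and $f(0)=0$. Admissible controls are $\mathcal{U}=L^\infty([0,\infty);\mathbb{R}^m)$; $\phi(t;x,u)$ denotes the unique solution with $\phi(0;x,u)=x$ under $u\in\mathcal{U}$, and it is assumed to exist for all $t\ge 0$. $\mathbb{B}(x;r)$ is the closed Euclidean ball of radius $r$ about $x$, and $\|x\|_A=\inf_{y\in A}\|x-y\|$. An obstacle set $U\subseteq\mathbb{R}^n$ is given and $S:=\mathbb{R}^n\setminus U$. Definitions: $\mathcal{D}_0=\{x:\exists u\in\mathcal{U},\ \lim_{t\to\infty}\|\phi(t;x,u)\|=0\}$; $\mathcal{D}=\{x:\exists u\in\mathcal{U},\ \lim_{t\to\infty}\|\phi(t;x,u)\|=0 \text{ and } \phi(t;x,u)\notin U\ \forall t\ge0\}$. Assumption A1 (local stabilizability): there exist $r>0$, $k>0$ and $\beta\in\mathcal{KL}$ such that for every $x\in\mathbb{B}(0;r)$ there is $u\in\mathcal{U}$ with $\|u\|_\infty\le k$ and $\|\phi(t;x,u)\|\le\beta(\|x\|,t)$ for all $t\ge0$. Assumption A2: (i) $S=\{x\in\mathbb{R}^n: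 h(x)<1\}$ for some locally Lipschitz $h:\mathbb{R}^n\to\mathbb{R}$; (ii) $S$ is open and connected; (iii) $\mathbb{B}(0;r)\subseteq S\subseteq\mathcal{D}_0$, with $r$ from Assumption A1. *)

theory Defs
  imports "HOL-Analysis.Analysis"
begin

text \<open>State space R^n is modelled as real^'n, input space R^m as real^'m,
  and n-by-m matrices as real^'m^'n (acting by *v).\<close>

definition loc_lipschitz :: "('a::metric_space \<Rightarrow> 'b::metric_space) \<Rightarrow> bool" where
  "loc_lipschitz F \<longleftrightarrow> (\<forall>x. \<exists>e>0. \<exists>L. L-lipschitz_on (cball x e) F)"

text \<open>Admissible controls: (representatives of) elements of L^infinity([0,inf); R^m).\<close>
definition admissible :: "(real \<Rightarrow> real^'m) set" where
  "admissible = {u. u \<in> borel_measurable (lebesgue_on {0..}) \<and>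
                    (\<exists>B. AE t in lebesgue_on {0..}. norm (u t) \<le> B)}"

definition ess_bounded_by :: "(real \<Rightarrow> real^'m) \<Rightarrow> real \<Rightarrow> bool" where
  "ess_bounded_by u k \<longleftrightarrow> (AE t in lebesgue_on {0..}. norm (u t) \<le> k)"

definition is_solution ::
  "(real^'n \<Rightarrow> real^'n) \<Rightarrow> (real^'n \<Rightarrow> real^'m^'n) \<Rightarrow> real^'n \<Rightarrow> (real \<Rightarrow> real^'m)
     \<Rightarrow> (real \<Rightarrow> real^'n) \<Rightarrow> bool" where
  "is_solution f g x0 u y \<longleftrightarrow>
     continuous_on {0..} y \<and>
     (\<forall>t\<ge>0. ((\<lambda>s. f (y s) + g (y s) *v u s) has_integral (y t - x0)) {0..t})"

definition class_K :: "(real \<Rightarrow> real) \<Rightarrow> bool" where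
  "class_K a \<longleftrightarrow> continuous_on {0..} a \<and> strict_mono_on {0..} a \<and> a 0 = 0"

definition class_KL :: "(real \<Rightarrow> real \<Rightarrow> real) \<Rightarrow> bool" where
  "class_KL \<beta> \<longleftrightarrow>
     continuous_on ({0..} \<times> {0..}) (\<lambda>(s,t). \<beta> s t) \<and>
     (\<forall>t\<ge>0. class_K (\<lambda>s. \<beta> s t)) \<and>
     (\<forall>s\<ge>0. antimono_on {0..} (\<lambda>t. \<beta> s t) \<and> ((\<lambda>t. \<beta> s t) \<longlongrightarrow> 0) at_top)"

definition null_ctrl_domain ::
  "(real^'n \<Rightarrow> real^'n) \<Rightarrow> (real^'n \<Rightarrow> real^'m^'n) \<Rightarrow> (real^'n) set" where
  "null_ctrl_domain f g = {x. \<exists>u\<in>(admissible :: (real \<Rightarrow> real^'m) set). \<exists>y.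
        is_solution f g x u y \<and> (y \<longlongrightarrow> 0) at_top}"

definition safe_null_ctrl_domain ::
  "(real^'n \<Rightarrow> real^'n) \<Rightarrow> (real^'n \<Rightarrow> real^'m^'n) \<Rightarrow> (real^'n) set \<Rightarrow> (real^'n) set" where
  "safe_null_ctrl_domain f g U = {x. \<exists>u\<in>(admissible :: (real \<Rightarrow> real^'m) set). \<exists>y.
        is_solution f g x u y \<and> (y \<longlongrightarrow> 0) at_top \<and> (\<forall>t\<ge>0. y t \<notin> U)}"

end

theory Submission
  imports Defs
begin

(* Connectedness: every point of D lies on a safe trajectory whose points all belong to D again,
   and the closure of that trajectory contains the origin, which lies in D. So each point of D
   is joined to 0 by a connected subset of D.

   Openness: by A1 and B(0;r) \<subseteq> S, D contains a ball B(0;rho). Given x in D with safe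
   trajectory y, pick T with |y(T)| < rho/2. On a compact neighbourhood of the arc y([0,T]) the
   fields f and g are Lipschitz, and S contains a uniform neighbourhood of the arc; by Gronwall's
   inequality the trajectory from any x' near x under the same control stays in that
   neighbourhood up to time T and ends in B(0;rho), from where it continues safely to 0. *)

lemma gronwall_integral_le:
  fixes e :: "real \<Rightarrow> real"
  assumes cont: "continuous_on {0..a} e" and C: "C \<ge> 0"
    and le: "\<And>t. t \<in> {0..a} \<Longrightarrow> e t \<le> c + C * integral {0..t} e"
    and t: "t \<in> {0..a}"
  shows "e t \<le> c * exp (C * t)"
proof -
  define \<phi> where "\<phi> t = integral {0..t} e" for t
  define w where "w t = (c + C * \<phi> t) * exp (-(C*t))" for t
  have \<phi>_cont: "continuous_on {0..a} \<phi>" unfolding \<phi>_def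
    by (rule indefinite_integral_continuous_1[OF integrable_continuous_interval[OF cont]])
  have w_cont: "continuous_on {0..t} w" unfolding w_def
    using t by (intro continuous_intros continuous_on_subset[OF \<phi>_cont]) auto
  have "\<exists>y. (w has_real_derivative y) (at x) \<and> y \<le> 0" if x: "0 < x" "x < t" for x
  proof -
    from x have xa: "x \<in> {0..a}" "0 < x" "x < a" using t by auto
    have "(\<phi> has_real_derivative e x) (at x)"
      using integral_has_real_derivative[OF cont, of x] xa at_within_Icc_at[of 0 x a]
      unfolding \<phi>_def by simp
    then have "(w has_real_derivative
            (C * e x) * exp (-(C*x)) + (c + C * \<phi> x) * (exp (-(C*x)) * (-C))) (at x)"
      unfolding w_def by (auto intro!: derivative_eq_intros)
    moreover have "C * e x \<le> C * (c + C * \<phi> x)"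
      using le[OF xa(1)] C unfolding \<phi>_def by (simp add: mult_left_mono)
    then have "(C * e x) * exp (-(C*x)) \<le> C * (c + C * \<phi> x) * exp (-(C*x))"
      by (simp add: mult_right_mono)
    then have "(C * e x) * exp (-(C*x)) + (c + C * \<phi> x) * (exp (-(C*x)) * (-C)) \<le> 0"
      by (simp add: algebra_simps)
    ultimately show ?thesis by blast
  qed
  then have "w t \<le> w 0" using DERIV_nonpos_imp_decreasing_open[of 0 t w] w_cont t by auto
  then have "c + C * \<phi> t \<le> c * exp (C * t)"
    by (simp add: w_def \<phi>_def exp_minus field_simps)
  then show ?thesis using le[OF t] unfolding \<phi>_def by simp
qed

lemma continuous_on_interval_less_induct:
  fixes e :: "real \<Rightarrow> real"
  assumes cont: "continuous_on {0..T} e" and start: "e 0 < \<delta>"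
    and step: "\<And>t. t \<in> {0..T} \<Longrightarrow> (\<And>s. s \<in> {0..t} \<Longrightarrow> e s \<le> \<delta>) \<Longrightarrow> e t < \<delta>"
    and t: "t \<in> {0..T}"
  shows "e t < \<delta>"
proof (rule ccontr)
  assume "\<not> e t < \<delta>"
  define A where "A = {0..T} \<inter> e -` {\<delta>..}"
  have "t \<in> A" using t \<open>\<not> e t < \<delta>\<close> by (auto simp: A_def)
  have "closed A" unfolding A_def by (rule continuous_closed_preimage[OF cont]) auto
  have "bdd_below A" unfolding A_def by (rule bdd_belowI[of _ 0]) auto
  define t1 where "t1 = Inf A"
  have "t1 \<in> A"
    unfolding t1_def using closed_contains_Inf[OF _ \<open>bdd_below A\<close> \<open>closed A\<close>] \<open>t \<in> A\<close> by blast
  then have t1: "t1 \<in> {0..T}" "\<delta> \<le> e t1" by (auto simp: A_def)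
  have "t1 \<noteq> 0" using start t1 by auto
  have "e s \<le> \<delta>" if "s \<in> {0..t1}" for s
  proof (rule continuous_le_on_closure[of "{0..<t1}" e s \<delta>])
    show "continuous_on (closure {0..<t1}) e"
      using \<open>t1 \<noteq> 0\<close> t1 by (auto intro: continuous_on_subset[OF cont])
    show "s \<in> closure {0..<t1}" using that \<open>t1 \<noteq> 0\<close> t1 by simp
    show "e s' \<le> \<delta>" if "s' \<in> {0..<t1}" for s'
    proof (rule ccontr)
      assume "\<not> e s' \<le> \<delta>"
      then have "s' \<in> A" using that t1 by (auto simp: A_def)
      then have "t1 \<le> s'" unfolding t1_def using \<open>bdd_below A\<close> by (rule cInf_lower)
      then show False using that by simp
    qed
  qed
  then have "e t1 < \<delta>" by (rule step[OF t1(1)])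
  then show False using t1 by simp
qed

lemma loc_lipschitz_compact_imp_lipschitz:
  fixes F :: "'a::metric_space \<Rightarrow> 'b::metric_space"
  assumes "loc_lipschitz F" "compact K"
  obtains L where "L-lipschitz_on K F"
proof -
  have "local_lipschitz {0::real} K (\<lambda>_. F)"
  proof (rule local_lipschitzI)
    fix x assume "x \<in> K"
    obtain e L where "e > 0" "L-lipschitz_on (cball x e) F"
      using assms(1) unfolding loc_lipschitz_def by blast
    then show "\<exists>u>0. \<exists>L. \<forall>t\<in>cball t u \<inter> {0}. L-lipschitz_on (cball x u \<inter> K) F" for t
      by (meson Int_lower1 lipschitz_on_subset)
  qed
  from local_lipschitz_compact_implies_lipschitz[OF this assms(2) compact_sing]
  show ?thesis using that by auto
qed

lemma norm_matrix_vector_mult_le: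
  fixes A :: "real^'m^'n"
  shows "norm (A *v x) \<le> real CARD('n) * real CARD('m) * norm A * norm x"
proof -
  have "\<bar>A $ i $ j\<bar> \<le> norm A" for i j
    using component_le_norm_cart[of "A $ i" j] Finite_Cartesian_Product.norm_nth_le[of A i]
    by linarith
  then have "onorm ((*v) A) \<le> real CARD('n) * real CARD('m) * norm A"
    by (rule onorm_le_matrix_component)
  moreover have "norm (A *v x) \<le> onorm ((*v) A) * norm x"
    by (rule onorm) (simp add: matrix_vector_mul_bounded_linear)
  ultimately show ?thesis by (meson mult_right_mono norm_ge_zero order_trans)
qed

lemma measurable_lebesgue_on_nonneg_shift:
  fixes u :: "real \<Rightarrow> 'b::euclidean_space"
  assumes "u \<in> borel_measurable (lebesgue_on {0..})" "c \<ge> 0"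
  shows "(\<lambda>s. u (c + s)) \<in> borel_measurable (lebesgue_on {0..})"
proof -
  define u0 where "u0 x = (if x \<in> {0..} then u x else 0)" for x
  have "u0 \<in> borel_measurable lebesgue" unfolding u0_def
    by (rule borel_measurable_if_I[OF assms(1)]) auto
  then have "(\<lambda>x. u0 (c + 1 *\<^sub>R x)) \<in> borel_measurable (lebesgue_on {0..})"
    by (intro measurable_restrict_space1 borel_measurable_affine) simp_all
  then show ?thesis
    by (rule measurable_cong[THEN iffD1, rotated]) (use assms(2) in \<open>auto simp: u0_def\<close>)
qed

lemma measurable_lebesgue_on_nonneg_concat:
  fixes u v :: "real \<Rightarrow> 'b::euclidean_space"
  assumes "u \<in> borel_measurable (lebesgue_on {0..})" "v \<in> borel_measurable (lebesgue_on {0..})"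
  shows "(\<lambda>s. if s \<le> T then u s else v (s - T)) \<in> borel_measurable (lebesgue_on {0..})"
proof -
  define v0 where "v0 x = (if x \<in> {0..} then v x else 0)" for x
  have "v0 \<in> borel_measurable lebesgue" unfolding v0_def
    by (rule borel_measurable_if_I[OF assms(2)]) auto
  then have "(\<lambda>x. v0 (-T + 1 *\<^sub>R x)) \<in> borel_measurable (lebesgue_on {0..})"
    by (intro measurable_restrict_space1 borel_measurable_affine) simp_all
  then have "(\<lambda>s. if s \<in> {..T} then u s else v0 (-T + 1 *\<^sub>R s))
      \<in> borel_measurable (lebesgue_on {0..})"
    by (rule measurable_If_set[OF assms(1)]) (auto simp: sets_restrict_space_iff)
  then show ?thesis
    by (rule measurable_cong[THEN iffD1, rotated]) (auto simp: v0_def)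
qed

lemma admissibleI:
  assumes "u \<in> borel_measurable (lebesgue_on {0..})" "\<And>s. norm (u s) \<le> B"
  shows "u \<in> admissible"
  unfolding admissible_def using assms by (auto intro!: exI[of _ B])

lemma is_solution_continuous: "is_solution f g x u y \<Longrightarrow> continuous_on {0..} y"
  unfolding is_solution_def by blast

lemma is_solution_has_integral:
  "is_solution f g x u y \<Longrightarrow> t \<ge> 0 \<Longrightarrow>
    ((\<lambda>s. f (y s) + g (y s) *v u s) has_integral (y t - x)) {0..t}"
  unfolding is_solution_def by blast

lemma is_solution_initial:
  assumes "is_solution f g x u y"
  shows "y 0 = x"
proof -
  have "((\<lambda>s. f (y s) + g (y s) *v u s) has_integral (y 0 - x)) {0..0}"
    using is_solution_has_integral[OF assms, of 0] by simp
  moreover have "((\<lambda>s. f (y s) + g (y s) *v u s) has_integral 0) {0..(0::real)}"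
    using has_integral_refl(2)[of _ 0] by simp
  ultimately have "y 0 - x = 0" by (rule has_integral_unique)
  then show ?thesis by simp
qed

lemma is_solution_control_AE_cong:
  assumes "AE s in lebesgue_on {0..}. u' s = u s" and sol: "is_solution f g x u y"
  shows "is_solution f g x u' y"
proof -
  have "AE s in lebesgue. s \<in> {0..} \<longrightarrow> u' s = u s"
    using assms(1) by (subst (asm) AE_restrict_space_iff) auto
  then obtain N where N: "\<And>s. s \<in> space lebesgue - N \<Longrightarrow> s \<in> {0..} \<longrightarrow> u' s = u s"
      "N \<in> null_sets lebesgue"
    by (erule AE_E3)
  have "negligible N" using N(2) by (simp add: negligible_iff_null_sets)
  show ?thesis
    unfolding is_solution_def
  proof (intro conjI allI impI)
    show "continuous_on {0..} y" using sol by (rule is_solution_continuous)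
    fix t :: real assume "t \<ge> 0"
    have integral_u: "((\<lambda>s. f (y s) + g (y s) *v u s) has_integral (y t - x)) {0..t}"
      using sol \<open>t \<ge> 0\<close> by (rule is_solution_has_integral)
    show "((\<lambda>s. f (y s) + g (y s) *v u' s) has_integral (y t - x)) {0..t}"
    proof (rule has_integral_spike[OF \<open>negligible N\<close> _ integral_u])
      fix s assume "s \<in> {0..t} - N"
      then show "f (y s) + g (y s) *v u' s = f (y s) + g (y s) *v u s" using N(1) by simp
    qed
  qed
qed

lemma admissible_bounded_representative:
  assumes "u \<in> admissible" and sol: "is_solution f g x u y"
  obtains u' B where "u' \<in> borel_measurable (lebesgue_on {0..})" "\<And>s. norm (u' s) \<le> B"
    and "is_solution f g x u' y"
proof -
  obtain B where [measurable]: "u \<in> borel_measurable (lebesgue_on {0..})"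
    and B: "AE s in lebesgue_on {0..}. norm (u s) \<le> B"
    using assms unfolding admissible_def by auto
  define u' where "u' s = (if norm (u s) \<le> B then u s else 0)" for s
  have "u' \<in> borel_measurable (lebesgue_on {0..})" unfolding u'_def by measurable
  moreover have "norm (u' s) \<le> max B 0" for s unfolding u'_def by auto
  moreover have "AE s in lebesgue_on {0..}. u' s = u s"
    using B by (rule eventually_mono) (simp add: u'_def)
  ultimately show ?thesis using that is_solution_control_AE_cong[OF _ sol] by blast
qed

lemma is_solution_shift:
  assumes sol: "is_solution f g x u y" and c: "c \<ge> 0"
  shows "is_solution f g (y c) (\<lambda>s. u (c + s)) (\<lambda>s. y (c + s))"
  unfolding is_solution_def
proof (intro conjI allI impI)
  have "continuous_on {0..} y" using sol by (rule is_solution_continuous)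
  then show "continuous_on {0..} (\<lambda>s. y (c + s))"
    by (rule continuous_on_compose2) (use c in \<open>auto intro!: continuous_intros\<close>)
  fix t :: real assume t: "t \<ge> 0"
  define F where "F s = f (y s) + g (y s) *v u s" for s
  have F_ct: "(F has_integral (y (c + t) - x)) {0..c + t}"
    and F_c: "(F has_integral (y c - x)) {0..c}"
    using is_solution_has_integral[OF sol] t c unfolding F_def by auto
  obtain j where j: "(F has_integral j) {c..c+t}"
    using integrable_subinterval_real[OF has_integral_integrable[OF F_ct], of c "c+t"] c t by auto
  have "(F has_integral (y c - x) + j) {0..c+t}"
    by (rule has_integral_combine[OF _ _ F_c j]) (use c t in auto)
  then have "(y c - x) + j = y (c + t) - x" using F_ct has_integral_unique by blast
  then have "j = y (c + t) - y c" by (simp add: algebra_simps)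
  with j have "(F has_integral y (c + t) - y c) {0 + c..t + c}" by (simp add: add.commute)
  then have "((F \<circ> (+) c) has_integral y (c + t) - y c) {0..t}"
    by (subst has_integral_shift_Icc_real)
  then show "((\<lambda>s. f (y (c + s)) + g (y (c + s)) *v u (c + s)) has_integral y (c + t) - y c) {0..t}"
    by (simp add: F_def o_def)
qed

lemma is_solution_concat:
  assumes sol1: "is_solution f g x u y" and sol2: "is_solution f g (y T) v z" and T: "T \<ge> 0"
  shows "is_solution f g x (\<lambda>s. if s \<le> T then u s else v (s - T))
                            (\<lambda>s. if s \<le> T then y s else z (s - T))"
  unfolding is_solution_def
proof (intro conjI allI impI)
  let ?w = "\<lambda>s. if s \<le> T then y s else z (s - T)"
  have y_cont: "continuous_on {0..} y" using sol1 by (rule is_solution_continuous)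
  have z_cont: "continuous_on {0..} z" using sol2 by (rule is_solution_continuous)
  have "continuous_on {0..T} ?w"
    by (rule continuous_on_cong[THEN iffD1, OF refl _ continuous_on_subset[OF y_cont]]) auto
  moreover have "continuous_on {T..} (\<lambda>s. z (s - T))"
    by (rule continuous_on_compose2[OF z_cont]) (auto intro!: continuous_intros)
  then have "continuous_on {T..} ?w"
    by (rule continuous_on_cong[THEN iffD1, OF refl, rotated])
      (auto simp: is_solution_initial[OF sol2])
  ultimately have "continuous_on ({0..T} \<union> {T..}) ?w"
    by (intro continuous_on_closed_Un) auto
  moreover have "{0..T} \<union> {T..} = {0::real..}" using T by auto
  ultimately show "continuous_on {0..} ?w" by simp
  fix t :: real assume t: "t \<ge> 0"
  define F where "F s = f (y s) + g (y s) *v u s" for s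
  define G where "G s = f (z s) + g (z s) *v v s" for s
  define H where "H s = f (?w s) + g (?w s) *v (if s \<le> T then u s else v (s - T))" for s
  show "(H has_integral ?w t - x) {0..t}"
  proof (cases "t \<le> T")
    case True
    have "(F has_integral y t - x) {0..t}"
      using is_solution_has_integral[OF sol1 t] unfolding F_def .
    then show ?thesis using True
      by (subst has_integral_cong[of _ H F]) (auto simp: H_def F_def)
  next
    case False
    have "(F has_integral y T - x) {0..T}"
      using is_solution_has_integral[OF sol1 T] unfolding F_def .
    then have H_0T: "(H has_integral y T - x) {0..T}"
      by (subst has_integral_cong[of _ H F]) (auto simp: H_def F_def)
    have "(G has_integral z (t - T) - y T) {0..t - T}"
      using is_solution_has_integral[OF sol2, of "t - T"] False unfolding G_def by simp
    then have "(((\<lambda>s. G (s - T)) \<circ> (+) T) has_integral z (t - T) - y T) {0..t - T}"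
      by (simp add: o_def)
    then have "((\<lambda>s. G (s - T)) has_integral z (t - T) - y T) {T..t}"
      by (subst (asm) has_integral_shift_Icc_real) simp
    then have H_Tt: "(H has_integral z (t - T) - y T) {T..t}"
    proof (rule has_integral_spike_finite[of "{T}", rotated 2])
      fix s assume "s \<in> {T..t} - {T}"
      then show "H s = G (s - T)" by (simp add: H_def G_def)
    qed simp
    have "(H has_integral (y T - x) + (z (t - T) - y T)) {0..t}"
      by (rule has_integral_combine[OF _ _ H_0T H_Tt]) (use T False in auto)
    then show ?thesis using False by simp
  qed
qed

lemma is_solution_dist_le:
  fixes f :: "real^'n \<Rightarrow> real^'n" and g :: "real^'n \<Rightarrow> real^'m^'n"
  assumes f_lip: "Lf-lipschitz_on K f" and g_lip: "Lg-lipschitz_on K g"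
    and u_bound: "\<And>s. norm (u s) \<le> B"
    and sol_y: "is_solution f g x u y" and sol_z: "is_solution f g x' u z"
    and t: "t \<ge> 0" and in_K: "\<And>s. s \<in> {0..t} \<Longrightarrow> y s \<in> K \<and> z s \<in> K"
  shows "norm (z t - y t) \<le>
    norm (x' - x) +
      (Lf + real CARD('n) * real CARD('m) * Lg * B) * integral {0..t} (\<lambda>s. norm (z s - y s))"
proof -
  define e where "e s = norm (z s - y s)" for s
  define C where "C = Lf + real CARD('n) * real CARD('m) * Lg * B"
  define Fy where "Fy s = f (y s) + g (y s) *v u s" for s
  define Fz where "Fz s = f (z s) + g (z s) *v u s" for s
  have "(Fz has_integral (z t - x')) {0..t}" "(Fy has_integral (y t - x)) {0..t}"
    using is_solution_has_integral[OF sol_z t] is_solution_has_integral[OF sol_y t]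
    unfolding Fy_def Fz_def by auto
  then have diff: "((\<lambda>s. Fz s - Fy s) has_integral (z t - x') - (y t - x)) {0..t}"
    by (rule has_integral_diff)
  have "continuous_on {0..t} e"
    using is_solution_continuous[OF sol_y] is_solution_continuous[OF sol_z] t unfolding e_def
    by (auto intro!: continuous_intros intro: continuous_on_subset)
  then have e_int: "e integrable_on {0..t}" by (rule integrable_continuous_interval)
  have "norm (Fz s - Fy s) \<le> C * e s" if "s \<in> {0..t}" for s
  proof -
    have "Lg \<ge> 0" using g_lip lipschitz_on_nonneg by blast
    have f_part: "norm (f (z s) - f (y s)) \<le> Lf * e s"
      using lipschitz_on_normD[OF f_lip] in_K[OF that] unfolding e_def by blast
    have "norm ((g (z s) - g (y s)) *v u s)
        \<le> real CARD('n) * real CARD('m) * norm (g (z s) - g (y s)) * norm (u s)"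
      by (rule norm_matrix_vector_mult_le)
    also have "\<dots> \<le> real CARD('n) * real CARD('m) * (Lg * e s) * B"
      using lipschitz_on_normD[OF g_lip] in_K[OF that] u_bound[of s] \<open>Lg \<ge> 0\<close>
      unfolding e_def by (intro mult_mono mult_left_mono) auto
    finally have g_part: "norm ((g (z s) - g (y s)) *v u s)
        \<le> real CARD('n) * real CARD('m) * Lg * B * e s" by (simp add: algebra_simps)
    have "Fz s - Fy s = (f (z s) - f (y s)) + (g (z s) - g (y s)) *v u s"
      unfolding Fz_def Fy_def by (simp add: matrix_vector_mult_diff_rdistrib)
    then have "norm (Fz s - Fy s) \<le> norm (f (z s) - f (y s)) + norm ((g (z s) - g (y s)) *v u s)"
      by (simp only: norm_triangle_ineq)
    also have "\<dots> \<le> Lf * e s + real CARD('n) * real CARD('m) * Lg * B * e s"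
      using f_part g_part by (rule add_mono)
    also have "\<dots> = C * e s" unfolding C_def by (simp add: algebra_simps)
    finally show ?thesis .
  qed
  then have "norm ((z t - x') - (y t - x)) \<le> integral {0..t} (\<lambda>s. C * e s)"
    using integral_norm_bound_integral[OF has_integral_integrable[OF diff]
        integrable_cmul[OF e_int]] integral_unique[OF diff]
    by simp
  moreover have "e t \<le> norm (x' - x) + norm ((z t - x') - (y t - x))"
    unfolding e_def using norm_triangle_ineq[of "x' - x" "(z t - x') - (y t - x)"] by simp
  ultimately show ?thesis unfolding e_def C_def by simp
qed

lemma is_solution_continuous_dependence:
  fixes f :: "real^'n \<Rightarrow> real^'n" and g :: "real^'n \<Rightarrow> real^'m^'n"
  assumes f_lip: "loc_lipschitz f" and g_lip: "loc_lipschitz g"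
    and u_bound: "\<And>s. norm (u s) \<le> B" and sol_y: "is_solution f g x u y"
    and "T \<ge> 0" "\<delta> > 0"
  obtains \<epsilon> where "\<epsilon> > 0"
    "\<And>x' z t. dist x' x < \<epsilon> \<Longrightarrow> is_solution f g x' u z \<Longrightarrow> t \<in> {0..T} \<Longrightarrow> dist (z t) (y t) < \<delta>"
proof -
  have y_cont: "continuous_on {0..} y" using sol_y by (rule is_solution_continuous)
  define K where "K = {a + b | a b. a \<in> y ` {0..T} \<and> b \<in> cball 0 1}"
  have "compact K" unfolding K_def
    by (intro compact_sums compact_continuous_image continuous_on_subset[OF y_cont]) auto
  then obtain Lf Lg where Lf: "Lf-lipschitz_on K f" and Lg: "Lg-lipschitz_on K g"
    using loc_lipschitz_compact_imp_lipschitz f_lip g_lip by metis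
  have near_K: "q \<in> K" if "s \<in> {0..T}" "dist q (y s) \<le> 1" for q s
  proof -
    have "q = y s + (q - y s)" "y s \<in> y ` {0..T}" "q - y s \<in> cball 0 1"
      using that by (auto simp: dist_norm norm_minus_commute)
    then show ?thesis unfolding K_def by blast
  qed
  define C where "C = Lf + real CARD('n) * real CARD('m) * Lg * B"
  have "C \<ge> 0"
  proof -
    have "y 0 \<in> K" using near_K[of 0] \<open>T \<ge> 0\<close> by simp
    then have "Lf \<ge> 0" "Lg \<ge> 0" using Lf Lg lipschitz_on_nonneg by blast+
    moreover have "B \<ge> 0" using u_bound[of 0] norm_ge_zero order_trans by blast
    ultimately show ?thesis unfolding C_def by simp
  qed
  (* Capping at 1 keeps z inside K as long as it stays delta'-close to y. *)
  define \<delta>' where "\<delta>' = min \<delta> 1"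
  define \<epsilon> where "\<epsilon> = \<delta>' * exp (-(C * T))"
  have "\<epsilon> > 0" using \<open>\<delta> > 0\<close> unfolding \<epsilon>_def \<delta>'_def by simp
  have \<epsilon>_le: "\<epsilon> \<le> \<delta>'" unfolding \<epsilon>_def
    by (rule mult_left_le) (use \<open>C \<ge> 0\<close> \<open>T \<ge> 0\<close> \<open>\<delta> > 0\<close> in \<open>auto simp: \<delta>'_def\<close>)
  have "dist (z t) (y t) < \<delta>"
    if x': "dist x' x < \<epsilon>" and sol_z: "is_solution f g x' u z" and t: "t \<in> {0..T}" for x' z t
  proof -
    define e where "e s = norm (z s - y s)" for s
    have e_cont: "continuous_on {0..T} e"
      using is_solution_continuous[OF sol_y] is_solution_continuous[OF sol_z] unfolding e_def
      by (auto intro!: continuous_intros intro: continuous_on_subset)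
    have "e 0 < \<delta>'"
      using x' \<epsilon>_le is_solution_initial[OF sol_y] is_solution_initial[OF sol_z]
      by (simp add: e_def dist_norm)
    moreover have "e t' < \<delta>'" if t': "t' \<in> {0..T}" and small: "\<And>s. s \<in> {0..t'} \<Longrightarrow> e s \<le> \<delta>'" for t'
    proof -
      have "e s \<le> norm (x' - x) + C * integral {0..s} e" if "s \<in> {0..t'}" for s
        unfolding e_def C_def
      proof (rule is_solution_dist_le[OF Lf Lg u_bound sol_y sol_z])
        fix r assume "r \<in> {0..s}"
        then have "r \<in> {0..T}" "dist (z r) (y r) \<le> 1"
          using that t' small[of r] by (auto simp: e_def dist_norm \<delta>'_def)
        then show "y r \<in> K \<and> z r \<in> K" using near_K by simp
      qed (use that in simp)
      then have "e t' \<le> norm (x' - x) * exp (C * t')"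
        using gronwall_integral_le[of t' e] e_cont t' \<open>C \<ge> 0\<close>
        by (force intro: continuous_on_subset)
      also have "\<dots> \<le> norm (x' - x) * exp (C * T)"
        using t' \<open>C \<ge> 0\<close> by (simp add: mult_left_mono)
      also have "\<dots> < \<epsilon> * exp (C * T)" using x' by (simp add: dist_norm)
      also have "\<dots> = \<delta>'" unfolding \<epsilon>_def by (simp add: exp_minus)
      finally show ?thesis .
    qed
    ultimately have "e t < \<delta>'" using continuous_on_interval_less_induct[OF e_cont] t by blast
    then show ?thesis by (simp add: e_def dist_norm \<delta>'_def)
  qed
  with \<open>\<epsilon> > 0\<close> show ?thesis using that by blast
qed

lemma safe_null_ctrl_domain_trajectory:
  assumes "u \<in> admissible" "is_solution f g x u y" "(y \<longlongrightarrow> 0) at_top" "\<forall>t\<ge>0. y t \<notin> U"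
    and "c \<ge> 0"
  shows "y c \<in> safe_null_ctrl_domain f g U"
proof -
  obtain u' B where u': "u' \<in> borel_measurable (lebesgue_on {0..})" "\<And>s. norm (u' s) \<le> B"
    and sol: "is_solution f g x u' y"
    using admissible_bounded_representative[OF assms(1,2)] by blast
  have "(\<lambda>s. u' (c + s)) \<in> admissible"
    using admissibleI[OF measurable_lebesgue_on_nonneg_shift[OF u'(1) \<open>c \<ge> 0\<close>] u'(2)] .
  moreover have "is_solution f g (y c) (\<lambda>s. u' (c + s)) (\<lambda>s. y (c + s))"
    using is_solution_shift[OF sol \<open>c \<ge> 0\<close>] .
  moreover have "((\<lambda>s. y (c + s)) \<longlongrightarrow> 0) at_top"
    using filterlim_compose[OF assms(3)
        filterlim_tendsto_add_at_top[OF tendsto_const filterlim_ident]] .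
  moreover have "\<forall>t\<ge>0. y (c + t) \<notin> U" using assms(4,5) by simp
  ultimately show ?thesis unfolding safe_null_ctrl_domain_def by blast
qed

lemma safe_null_ctrl_domain_prepend:
  assumes u: "u \<in> admissible" and sol_z: "is_solution f g x u z" and "T \<ge> 0"
    and safe: "\<forall>t\<in>{0..T}. z t \<notin> U" and "z T \<in> safe_null_ctrl_domain f g U"
  shows "x \<in> safe_null_ctrl_domain f g U"
proof -
  obtain v \<eta> where v: "v \<in> admissible" and sol_\<eta>: "is_solution f g (z T) v \<eta>"
    and lim_\<eta>: "(\<eta> \<longlongrightarrow> 0) at_top" and safe_\<eta>: "\<forall>t\<ge>0. \<eta> t \<notin> U"
    using assms(5) unfolding safe_null_ctrl_domain_def by blast
  obtain u' Bu where u': "u' \<in> borel_measurable (lebesgue_on {0..})" "\<And>s. norm (u' s) \<le> Bu"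
    and sol_z': "is_solution f g x u' z"
    using admissible_bounded_representative[OF u sol_z] by blast
  obtain v' Bv where v': "v' \<in> borel_measurable (lebesgue_on {0..})" "\<And>s. norm (v' s) \<le> Bv"
    and sol_\<eta>': "is_solution f g (z T) v' \<eta>"
    using admissible_bounded_representative[OF v sol_\<eta>] by blast
  define w where "w s = (if s \<le> T then u' s else v' (s - T))" for s
  define \<zeta> where "\<zeta> s = (if s \<le> T then z s else \<eta> (s - T))" for s
  have "w \<in> admissible"
  proof (rule admissibleI)
    show "w \<in> borel_measurable (lebesgue_on {0..})"
      unfolding w_def by (rule measurable_lebesgue_on_nonneg_concat[OF u'(1) v'(1)])
    show "norm (w s) \<le> max Bu Bv" for s
      using u'(2)[of s] v'(2)[of "s - T"] unfolding w_def by auto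
  qed
  moreover have "is_solution f g x w \<zeta>"
    unfolding w_def \<zeta>_def by (rule is_solution_concat[OF sol_z' sol_\<eta>' \<open>T \<ge> 0\<close>])
  moreover have "(\<zeta> \<longlongrightarrow> 0) at_top"
  proof -
    have "filterlim (\<lambda>s. - T + s) at_top at_top"
      by (rule filterlim_tendsto_add_at_top[OF tendsto_const filterlim_ident])
    then have "((\<lambda>s. \<eta> (s - T)) \<longlongrightarrow> 0) at_top"
      using filterlim_compose[OF lim_\<eta>] by simp
    moreover have "\<forall>\<^sub>F s in at_top. \<eta> (s - T) = \<zeta> s"
      using eventually_gt_at_top[of T] by eventually_elim (simp add: \<zeta>_def)
    ultimately show ?thesis by (rule tendsto_cong[THEN iffD1, rotated])
  qed
  moreover have "\<forall>t\<ge>0. \<zeta> t \<notin> U"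
    using safe safe_\<eta> by (auto simp: \<zeta>_def)
  ultimately show ?thesis unfolding safe_null_ctrl_domain_def by blast
qed

lemma connected_insert_limit_image:
  fixes y :: "real \<Rightarrow> 'a::metric_space"
  assumes "continuous_on {0..} y" "(y \<longlongrightarrow> l) at_top"
  shows "connected (insert l (y ` {0..}))"
proof (rule connected_intermediate_closure)
  show "connected (y ` {0..})" using assms(1) by (rule connected_continuous_image) simp
  have "y t \<in> closure (y ` {0..})" if "t \<ge> 0" for t
    using that by (intro closure_subset[THEN subsetD] imageI) simp
  then have "\<forall>\<^sub>F t in at_top. y t \<in> closure (y ` {0..})"
    using eventually_ge_at_top[of 0] by (rule eventually_mono[rotated])
  then have "l \<in> closure (y ` {0..})"
    by (rule Lim_in_closed_set[OF closed_closure _ trivial_limit_at_top_linorder assms(2)])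
  then show "insert l (y ` {0..}) \<subseteq> closure (y ` {0..})"
    by (rule insert_subsetI[OF _ closure_subset])
qed (rule subset_insertI)

lemma connected_safe_null_ctrl_domain:
  assumes "0 \<in> safe_null_ctrl_domain f g U"
  shows "connected (safe_null_ctrl_domain f g U)"
proof -
  have from_zero: "connected_component (safe_null_ctrl_domain f g U) 0 x"
    if x: "x \<in> safe_null_ctrl_domain f g U" for x
  proof -
    obtain u y where u: "u \<in> admissible" and sol: "is_solution f g x u y"
      and lim: "(y \<longlongrightarrow> 0) at_top" and safe: "\<forall>t\<ge>0. y t \<notin> U"
      using x unfolding safe_null_ctrl_domain_def by blast
    have "continuous_on {0..} y" using sol by (rule is_solution_continuous)
    then have "connected (insert 0 (y ` {0..}))" using lim by (rule connected_insert_limit_image)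
    moreover have "x \<in> y ` {0..}" using is_solution_initial[OF sol] by force
    moreover have "y ` {0..} \<subseteq> safe_null_ctrl_domain f g U"
      using safe_null_ctrl_domain_trajectory[OF u sol lim safe] by auto
    ultimately show ?thesis
      using assms by (intro connected_componentI[of "insert 0 (y ` {0..})"]) auto
  qed
  show ?thesis unfolding connected_iff_connected_component
  proof (intro ballI)
    fix x x' assume "x \<in> safe_null_ctrl_domain f g U" "x' \<in> safe_null_ctrl_domain f g U"
    then show "connected_component (safe_null_ctrl_domain f g U) x x'"
      using connected_component_trans connected_component_sym from_zero by metis
  qed
qed

lemma ball_subset_safe_null_ctrl_domain:
  assumes "r > 0" and KL: "class_KL \<beta>"
    and stabilizable: "\<forall>x\<in>cball 0 r. \<exists>u\<in>admissible.
          \<exists>y. is_solution f g x u y \<and> (\<forall>t\<ge>0. norm (y t) \<le> \<beta> (norm x) t)"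
    and "cball 0 r \<subseteq> - U"
  obtains \<rho> where "\<rho> > 0" "ball 0 \<rho> \<subseteq> safe_null_ctrl_domain f g U"
proof -
  have cont: "continuous_on {0..} (\<lambda>s. \<beta> s 0)" and "\<beta> 0 0 = 0"
    using KL unfolding class_KL_def class_K_def by auto
  have "\<exists>d>0. \<forall>s\<in>{0..}. dist s 0 < d \<longrightarrow> dist (\<beta> s 0) (\<beta> 0 0) < r"
    using cont[unfolded continuous_on_iff, rule_format, of 0 r] \<open>r > 0\<close> by simp
  then obtain d where "d > 0" and d: "\<forall>s\<in>{0..}. dist s 0 < d \<longrightarrow> dist (\<beta> s 0) (\<beta> 0 0) < r"
    by blast
  define \<rho> where "\<rho> = min d r"
  have in_domain: "x \<in> safe_null_ctrl_domain f g U" if "x \<in> ball 0 \<rho>" for x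
  proof -
    have "norm x < \<rho>" using that by simp
    then have "x \<in> cball 0 r" by (simp add: \<rho>_def)
    then obtain u y where u: "u \<in> admissible" and sol: "is_solution f g x u y"
      and bound: "\<And>t. t \<ge> 0 \<Longrightarrow> norm (y t) \<le> \<beta> (norm x) t"
      using stabilizable by blast
    have "antimono_on {0..} (\<beta> (norm x))" using KL unfolding class_KL_def by simp
    then have "\<beta> (norm x) t \<le> \<beta> (norm x) 0" if "t \<ge> 0" for t
      using monotone_onD[of "{0..}" _ _ _ 0 t] that by simp
    moreover have "\<beta> (norm x) 0 < r"
      using d[rule_format, of "norm x"] \<open>norm x < \<rho>\<close> \<open>\<beta> 0 0 = 0\<close>
      by (simp add: \<rho>_def dist_real_def)
    ultimately have "norm (y t) \<le> r" if "t \<ge> 0" for t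
      using bound[OF that] that by fastforce
    then have "y t \<in> cball 0 r" if "t \<ge> 0" for t using that by simp
    then have "\<forall>t\<ge>0. y t \<notin> U" using assms(4) by blast
    moreover have "(y \<longlongrightarrow> 0) at_top"
    proof (rule Lim_null_comparison)
      show "\<forall>\<^sub>F t in at_top. norm (y t) \<le> \<beta> (norm x) t"
        using eventually_ge_at_top[of 0] by eventually_elim (rule bound)
      show "(\<beta> (norm x) \<longlongrightarrow> 0) at_top" using KL unfolding class_KL_def by simp
    qed
    ultimately show ?thesis unfolding safe_null_ctrl_domain_def using u sol by blast
  qed
  have "\<rho> > 0" using \<open>d > 0\<close> \<open>r > 0\<close> by (simp add: \<rho>_def)
  moreover have "ball 0 \<rho> \<subseteq> safe_null_ctrl_domain f g U" using in_domain by (rule subsetI)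
  ultimately show ?thesis by (rule that)
qed

lemma open_safe_null_ctrl_domain:
  fixes f :: "real^'n \<Rightarrow> real^'n" and g :: "real^'n \<Rightarrow> real^'m^'n"
  assumes f_lip: "loc_lipschitz f" and g_lip: "loc_lipschitz g"
    and exist: "\<And>x u. u \<in> admissible \<Longrightarrow> \<exists>y. is_solution f g x u y"
    and "open (- U)" and "\<rho> > 0" and ball: "ball 0 \<rho> \<subseteq> safe_null_ctrl_domain f g U"
  shows "open (safe_null_ctrl_domain f g U)"
  unfolding open_contains_ball
proof
  fix x assume "x \<in> safe_null_ctrl_domain f g U"
  then obtain u y where u: "u \<in> admissible" and sol: "is_solution f g x u y"
    and lim: "(y \<longlongrightarrow> 0) at_top" and safe: "\<forall>t\<ge>0. y t \<notin> U"
    unfolding safe_null_ctrl_domain_def by blast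
  obtain u' B where u': "u' \<in> borel_measurable (lebesgue_on {0..})" "\<And>s. norm (u' s) \<le> B"
    and sol': "is_solution f g x u' y"
    using admissible_bounded_representative[OF u sol] by blast
  have "u' \<in> admissible" using admissibleI[OF u'] .
  have "\<forall>\<^sub>F t in at_top. norm (y t) < \<rho> / 2"
    using tendsto_norm_zero[OF lim] \<open>\<rho> > 0\<close> by (intro order_tendstoD(2)) auto
  then obtain T0 where T0: "\<And>t. t \<ge> T0 \<Longrightarrow> norm (y t) < \<rho> / 2"
    by (auto simp: eventually_at_top_linorder)
  define T where "T = max T0 0"
  have "T \<ge> 0" and yT: "norm (y T) < \<rho> / 2" using T0[of T] by (simp_all add: T_def)
  have "continuous_on {0..} y" using sol by (rule is_solution_continuous)
  then have "compact (y ` {0..T})"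
    by (rule compact_continuous_image[OF continuous_on_subset]) auto
  moreover have "y ` {0..T} \<subseteq> - U" using safe by auto
  ultimately obtain \<delta>U where "\<delta>U > 0" and \<delta>U: "(\<Union>p\<in>y ` {0..T}. ball p \<delta>U) \<subseteq> - U"
    using compact_subset_open_imp_ball_epsilon_subset \<open>open (- U)\<close> by metis
  obtain \<epsilon> where "\<epsilon> > 0" and close: "\<And>x' z t. dist x' x < \<epsilon> \<Longrightarrow> is_solution f g x' u' z \<Longrightarrow>
      t \<in> {0..T} \<Longrightarrow> dist (z t) (y t) < min \<delta>U (\<rho> / 2)"
    using is_solution_continuous_dependence[OF f_lip g_lip u'(2) sol' \<open>T \<ge> 0\<close>, of "min \<delta>U (\<rho> / 2)"]
      \<open>\<delta>U > 0\<close> \<open>\<rho> > 0\<close> by auto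
  have "x' \<in> safe_null_ctrl_domain f g U" if "x' \<in> ball x \<epsilon>" for x'
  proof -
    obtain z where sol_z: "is_solution f g x' u' z" using exist[OF \<open>u' \<in> admissible\<close>] by blast
    have close_z: "dist (z t) (y t) < min \<delta>U (\<rho> / 2)" if "t \<in> {0..T}" for t
      using close[OF _ sol_z that] \<open>x' \<in> ball x \<epsilon>\<close> by (simp add: dist_commute)
    have "z t \<notin> U" if "t \<in> {0..T}" for t
    proof -
      have "z t \<in> ball (y t) \<delta>U" using close_z[OF that] by (simp add: dist_commute)
      then show ?thesis using \<delta>U that by blast
    qed
    moreover have "norm (z T) < \<rho>"
      using close_z[of T] \<open>T \<ge> 0\<close> yT norm_triangle_sub[of "z T" "y T"]
      by (simp add: dist_norm)
    then have "z T \<in> safe_null_ctrl_domain f g U" using ball by auto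
    ultimately show ?thesis
      using safe_null_ctrl_domain_prepend[OF \<open>u' \<in> admissible\<close> sol_z \<open>T \<ge> 0\<close>] by blast
  qed
  then show "\<exists>\<epsilon>>0. ball x \<epsilon> \<subseteq> safe_null_ctrl_domain f g U" using \<open>\<epsilon> > 0\<close> by blast
qed

theorem mainTheorem1:
  fixes f :: "real^'n \<Rightarrow> real^'n" and g :: "real^'n \<Rightarrow> real^'m^'n"
    and U :: "(real^'n) set" and h :: "real^'n \<Rightarrow> real"
    and r k :: real and \<beta> :: "real \<Rightarrow> real \<Rightarrow> real"
  assumes f_lip: "loc_lipschitz f" and g_lip: "loc_lipschitz g" and f0: "f 0 = 0"
    and exist: "\<And>x u. u \<in> admissible \<Longrightarrow> \<exists>y. is_solution f g x u y"
    and unique: "\<And>x u y1 y2 t. u \<in> admissible \<Longrightarrow> is_solution f g x u y1 \<Longrightarrow>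
                    is_solution f g x u y2 \<Longrightarrow> t \<ge> 0 \<Longrightarrow> y1 t = y2 t"
    and A1: "r > 0" "k > 0" "class_KL \<beta>"
      "\<forall>x\<in>cball 0 r. \<exists>u\<in>admissible. ess_bounded_by u k \<and>
          (\<exists>y. is_solution f g x u y \<and> (\<forall>t\<ge>0. norm (y t) \<le> \<beta> (norm x) t))"
    and A2_h: "loc_lipschitz h" "- U = {x. h x < 1}"
    and A2_S: "open (- U)" "connected (- U)"
    and A2_sub: "cball 0 r \<subseteq> - U"
      "- U \<subseteq> (null_ctrl_domain f g :: (real^'n) set)"
  shows "open (safe_null_ctrl_domain f g U :: (real^'n) set) \<and>
         connected (safe_null_ctrl_domain f g U :: (real^'n) set)"
proof -
  have "\<forall>x\<in>cball 0 r. \<exists>u\<in>admissible.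
      \<exists>y. is_solution f g x u y \<and> (\<forall>t\<ge>0. norm (y t) \<le> \<beta> (norm x) t)"
    using A1(4) by blast
  then obtain \<rho> where "\<rho> > 0" and ball: "ball 0 \<rho> \<subseteq> safe_null_ctrl_domain f g U"
    using ball_subset_safe_null_ctrl_domain[OF A1(1) A1(3) _ A2_sub(1)] by blast
  have "open (safe_null_ctrl_domain f g U)"
    by (rule open_safe_null_ctrl_domain[OF f_lip g_lip exist A2_S(1) \<open>\<rho> > 0\<close> ball])
  moreover have "connected (safe_null_ctrl_domain f g U)"
    using ball \<open>\<rho> > 0\<close> by (intro connected_safe_null_ctrl_domain) auto
  ultimately show ?thesis by blast
qed

end
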